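(* Let $\Gamma$ be a metrized graph, and for each edge $e_i\in E(\Gamma)$ let $p_i,q_i$ be its end points. For any $p \in V(\Gamma)$, $$\sum_{e_i \in E(\Gamma)}\frac{L_i(R_{a_i,p}-R_{b_i,p})^2}{(L_i+R_i)^2} =\sum_{e_i \in E(\Gamma)}\frac{L_i}{L_i + R_i}\big(r(p_i,p)+r(q_i,p)\big) - \sum_{q \in V(\Gamma)}(\mathrm{val}(q)-2)\,r(p,q) = 2\sum_{q \in V(\Gamma)}r(p,q) -\sum_{e_i \in E(\Gamma)}\frac{R_i}{L_i + R_i} \big(r(p_i,p)+r(q_i,p)\big).$$
   Context: A metrized graph $\Gamma$ is a finite connected graph (multiple edges and self-loops allowed) each of whose edges is identified with a closed segment of positive length, with a finite nonempty vertex set $V(\Gamma)$ containing every point of valence $\neq2$; $\mathrm{val}(q)$ is the valence of $q$ (number of directions emanating from $q$); $L_i$ is the length of $e_i$; $r$ is the effective resistance (edges as resistors of resistance equal to length). For an edge $e_i$: if $\Gamma-e_i$ (interior deleted) is connected, $R_i$ is the effective resistance between $p_i,q_i$ in $\Gamma-e_i$, $R_{a_i,p}=\hat j_{p_i}(p,q_i)$, $R_{b_i,p}=\hat j_{q_i}(p,p_i)$ with $\hat j_z(x,y)$ the voltage function of $\Gamma-e_i$ (potential at $x$ when unit current enters at $y$ and exits at $z$, potential $0$ at $z$); if $e_i$ is a bridge, $R_{a_i,p}=0,R_{b_i,p}=R_i$ for $p$ in the component of $\Gamma-e_i$ containing $p_i$ and $R_{a_i,p}=R_i,R_{b_i,p}=0$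 otherwise, with every expression in $R_i$ interpreted as its limit as $R_i\to\infty$; for a self-loop $R_i=0$. *)

theory Defs
  imports Complex_Main
begin

text \<open>A metrized graph is modelled by its (finite) vertex set V, a finite set E of edge
  labels, endpoint maps ep, eq (edge i has endpoints ep i, eq i; multiple edges and
  self-loops allowed) and edge lengths L. Effective resistances between vertices of a
  metrized graph coincide with those of the discrete electrical network on V with
  resistances L i.\<close>

definition metrized_graph ::
  "'v set \<Rightarrow> 'e set \<Rightarrow> ('e \<Rightarrow> 'v) \<Rightarrow> ('e \<Rightarrow> 'v) \<Rightarrow> ('e \<Rightarrow> real) \<Rightarrow> bool" where
  "metrized_graph V E ep eq L \<longleftrightarrow> finite V \<and> V \<noteq> {} \<and> finite E \<and>
     (\<forall>i\<in>E. ep i \<in> V \<and> eq i \<in> V \<and> L i > 0)"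

definition adj :: "'e set \<Rightarrow> ('e \<Rightarrow> 'v) \<Rightarrow> ('e \<Rightarrow> 'v) \<Rightarrow> ('v \<times> 'v) set" where
  "adj E ep eq = {(ep i, eq i) | i. i \<in> E} \<union> {(eq i, ep i) | i. i \<in> E}"

definition connected_graph :: "'v set \<Rightarrow> 'e set \<Rightarrow> ('e \<Rightarrow> 'v) \<Rightarrow> ('e \<Rightarrow> 'v) \<Rightarrow> bool" where
  "connected_graph V E ep eq \<longleftrightarrow> (\<forall>x\<in>V. \<forall>y\<in>V. (x, y) \<in> (adj E ep eq)\<^sup>*)"

text \<open>Valence of a vertex: number of edge-ends at it (a self-loop counts twice).\<close>
definition val :: "'e set \<Rightarrow> ('e \<Rightarrow> 'v) \<Rightarrow> ('e \<Rightarrow> 'v) \<Rightarrow> 'v \<Rightarrow> nat" where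
  "val E ep eq x = card {i \<in> E. ep i = x} + card {i \<in> E. eq i = x}"

text \<open>Network Laplacian (net current flowing out of u for potential f).\<close>
definition lap :: "'e set \<Rightarrow> ('e \<Rightarrow> 'v) \<Rightarrow> ('e \<Rightarrow> 'v) \<Rightarrow> ('e \<Rightarrow> real) \<Rightarrow> ('v \<Rightarrow> real) \<Rightarrow> 'v \<Rightarrow> real" where
  "lap E ep eq L f u =
     (\<Sum>i\<in>{i \<in> E. ep i = u}. (f u - f (eq i)) / L i) +
     (\<Sum>i\<in>{i \<in> E. eq i = u}. (f u - f (ep i)) / L i)"

text \<open>Voltage function j_z(x,y): potential at x when unit current enters at y and exits
  at z, with potential 0 at z.\<close>
definition jvolt :: "'v set \<Rightarrow> 'e set \<Rightarrow> ('e \<Rightarrow> 'v) \<Rightarrow> ('e \<Rightarrow> 'v) \<Rightarrow> ('e \<Rightarrow> real)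
    \<Rightarrow> 'v \<Rightarrow> 'v \<Rightarrow> 'v \<Rightarrow> real" where
  "jvolt V E ep eq L z x y =
     (THE f. f z = 0 \<and>
        (\<forall>u\<in>V. lap E ep eq L f u = (if u = y then 1 else 0) - (if u = z then 1 else 0)) \<and>
        (\<forall>u. u \<notin> V \<longrightarrow> f u = 0)) x"

definition eff_res :: "'v set \<Rightarrow> 'e set \<Rightarrow> ('e \<Rightarrow> 'v) \<Rightarrow> ('e \<Rightarrow> 'v) \<Rightarrow> ('e \<Rightarrow> real)
    \<Rightarrow> 'v \<Rightarrow> 'v \<Rightarrow> real" where
  "eff_res V E ep eq L x y = jvolt V E ep eq L y x x"

definition is_bridge :: "'v set \<Rightarrow> 'e set \<Rightarrow> ('e \<Rightarrow> 'v) \<Rightarrow> ('e \<Rightarrow> 'v) \<Rightarrow> 'e \<Rightarrow> bool" where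
  "is_bridge V E ep eq i \<longleftrightarrow> \<not> connected_graph V (E - {i}) ep eq"

definition R_del where
  "R_del V E ep eq L i = eff_res V (E - {i}) ep eq L (ep i) (eq i)"
definition R_a where
  "R_a V E ep eq L i p = jvolt V (E - {i}) ep eq L (ep i) p (eq i)"
definition R_b where
  "R_b V E ep eq L i p = jvolt V (E - {i}) ep eq L (eq i) p (ep i)"

text \<open>For a bridge: R_a = 0, R_b = R_i if p lies in the component of Gamma - e_i containing
  p_i, and R_a = R_i, R_b = 0 otherwise; expressions are taken as limits R_i \<rightarrow> \<infinity>.\<close>
definition edge_expr ::
  "'v set \<Rightarrow> 'e set \<Rightarrow> ('e \<Rightarrow> 'v) \<Rightarrow> ('e \<Rightarrow> 'v) \<Rightarrow> ('e \<Rightarrow> real) \<Rightarrow> 'e \<Rightarrow> 'v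
     \<Rightarrow> (real \<Rightarrow> real \<Rightarrow> real \<Rightarrow> real \<Rightarrow> real) \<Rightarrow> real" where
  "edge_expr V E ep eq L i p F =
     (if is_bridge V E ep eq i then
        (if (ep i, p) \<in> (adj (E - {i}) ep eq)\<^sup>*
         then Lim at_top (\<lambda>t. F (L i) t 0 t)
         else Lim at_top (\<lambda>t. F (L i) t t 0))
      else F (L i) (R_del V E ep eq L i) (R_a V E ep eq L i p) (R_b V E ep eq L i p))"

end

theory Submission
  imports Defs "Jordan_Normal_Form.Determinant" "HOL-Real_Asymp.Real_Asymp"
begin

text \<open>Write \<open>d u = r(u, p)\<close>. The voltage functions exist because the Laplacian of a connected
  network, restricted to the vertices other than the ground, is nonsingular. Testing the unit-current
  potentials \<open>j_p(\<cdot>, u)\<close> against \<open>d\<close> and summing over \<open>u\<close> by Green's identity gives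
  \<open>2 \<Sum>_q r(p, q) = \<Sum>_i ((d p_i - d q_i)\<^sup>2 + r(p_i, q_i) (d p_i + d q_i)) / L_i\<close>,
  while \<open>\<Sum>_q val(q) d q = \<Sum>_i (d p_i + d q_i)\<close>. For a non-bridge \<open>e_i\<close>, viewing the network as
  \<open>e_i\<close> in parallel with \<open>\<Gamma> - e_i\<close> gives \<open>r(p_i, q_i) = L_i R_i / (L_i + R_i)\<close> and
  \<open>d p_i - d q_i = L_i (R_{a_i,p} - R_{b_i,p}) / (L_i + R_i)\<close>; for a bridge \<open>r(p_i, q_i) = L_i\<close> and
  \<open>|d p_i - d q_i| = L_i\<close>, which are exactly the limiting values.\<close>

lemma mult_mat_vec_surjective_if_injective:
  fixes A :: "'a::field mat"
  assumes A: "A \<in> carrier_mat n n"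
    and inj: "\<And>v. v \<in> carrier_vec n \<Longrightarrow> A *\<^sub>v v = 0\<^sub>v n \<Longrightarrow> v = 0\<^sub>v n"
    and b: "b \<in> carrier_vec n"
  shows "\<exists>x \<in> carrier_vec n. A *\<^sub>v x = b"
proof -
  have "det A \<noteq> 0"
    using det_0_iff_vec_prod_zero_field[OF A] inj by blast
  from det_non_zero_imp_unit[OF A this, unfolded Units_def, of "()"]
  obtain B where B: "B \<in> carrier_mat n n" "A * B = 1\<^sub>m n"
    by (auto simp: ring_mat_def)
  have "A *\<^sub>v (B *\<^sub>v b) = b"
    using A B b by (simp flip: assoc_mult_mat_vec)
  then show ?thesis
    using B b by (intro bexI[of _ "B *\<^sub>v b"]) auto
qed

lemma linear_system_solvable_if_unique:
  fixes M :: "'a \<Rightarrow> 'a \<Rightarrow> 'b::field"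
  assumes fin: "finite W"
    and uniq: "\<And>f. \<forall>u\<in>W. (\<Sum>w\<in>W. M u w * f w) = 0 \<Longrightarrow> \<forall>w\<in>W. f w = 0"
  shows "\<exists>f. \<forall>u\<in>W. (\<Sum>w\<in>W. M u w * f w) = s u"
proof -
  define n where "n = card W"
  obtain e where e: "bij_betw e {..<n} W"
    using ex_bij_betw_nat_finite[OF fin] unfolding n_def atLeast0LessThan by blast
  define ie where "ie = inv_into {..<n} e"
  have ie: "ie w < n" "e (ie w) = w" if "w \<in> W" for w
    using bij_betwE[OF bij_betw_inv_into[OF e]] bij_betw_inv_into_right[OF e] that
    unfolding ie_def by auto
  have ie_e: "ie (e j) = j" if "j < n" for j
    using e that unfolding ie_def by (simp add: bij_betw_inv_into_left)
  define A where "A = mat n n (\<lambda>(i, j). M (e i) (e j))"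
  have A: "A \<in> carrier_mat n n"
    unfolding A_def by simp
  have A_vec: "A *\<^sub>v vec n (f \<circ> e) = vec n (\<lambda>i. \<Sum>w\<in>W. M (e i) w * f w)" for f
  proof (rule eq_vecI)
    fix i assume "i < dim_vec (vec n (\<lambda>i. \<Sum>w\<in>W. M (e i) w * f w))"
    then have i: "i < n" by simp
    have "(A *\<^sub>v vec n (f \<circ> e)) $ i = (\<Sum>j<n. M (e i) (e j) * f (e j))"
      using i unfolding A_def by (simp add: scalar_prod_def atLeast0LessThan)
    also have "\<dots> = (\<Sum>w\<in>W. M (e i) w * f w)"
      using sum.reindex_bij_betw[OF e, of "\<lambda>w. M (e i) w * f w"] by simp
    finally show "(A *\<^sub>v vec n (f \<circ> e)) $ i = vec n (\<lambda>i. \<Sum>w\<in>W. M (e i) w * f w) $ i"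
      using i by simp
  qed (simp add: A_def)
  have vec_eq: "v = vec n ((\<lambda>w. v $ ie w) \<circ> e)" if "v \<in> carrier_vec n" for v
    using that ie_e by (intro eq_vecI) auto
  have "\<exists>x \<in> carrier_vec n. A *\<^sub>v x = vec n (s \<circ> e)"
  proof (rule mult_mat_vec_surjective_if_injective[OF A])
    fix v assume v: "v \<in> carrier_vec n" "A *\<^sub>v v = 0\<^sub>v n"
    have "\<forall>u\<in>W. (\<Sum>w\<in>W. M u w * v $ ie w) = 0"
    proof
      fix u assume u: "u \<in> W"
      have "(\<Sum>w\<in>W. M u w * v $ ie w) = (A *\<^sub>v v) $ ie u"
        using arg_cong[OF A_vec[of "\<lambda>w. v $ ie w"], of "\<lambda>x. x $ ie u"] vec_eq[OF v(1)] ie[OF u]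
        by simp
      then show "(\<Sum>w\<in>W. M u w * v $ ie w) = 0"
        using v(2) ie[OF u] by simp
    qed
    then have "\<forall>w\<in>W. v $ ie w = 0"
      by (rule uniq)
    then show "v = 0\<^sub>v n"
    proof (intro eq_vecI)
      fix i assume "i < dim_vec (0\<^sub>v n)"
      then show "v $ i = 0\<^sub>v n $ i"
        using ie_e[of i] bij_betwE[OF e] \<open>\<forall>w\<in>W. v $ ie w = 0\<close> by (metis index_zero_vec(1,2) lessThan_iff)
    qed (use v(1) in simp)
  qed simp
  then obtain x where x: "x \<in> carrier_vec n" "A *\<^sub>v x = vec n (s \<circ> e)" ..
  show ?thesis
  proof (intro exI ballI)
    fix u assume u: "u \<in> W"
    have "vec n (\<lambda>i. \<Sum>w\<in>W. M (e i) w * x $ ie w) = vec n (s \<circ> e)"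
      using A_vec[of "\<lambda>w. x $ ie w"] vec_eq[OF x(1)] x(2) by simp
    from arg_cong[OF this, of "\<lambda>v. v $ ie u"] show "(\<Sum>w\<in>W. M u w * x $ ie w) = s u"
      using ie[OF u] by simp
  qed
qed

lemma Lim_at_top_edge_fractions:
  fixes l :: real
  shows "Lim at_top (\<lambda>t. l * (0 - t)\<^sup>2 / (l + t)\<^sup>2) = l"
    and "Lim at_top (\<lambda>t. l * (t - 0)\<^sup>2 / (l + t)\<^sup>2) = l"
    and "Lim at_top (\<lambda>t. l / (l + t)) = 0"
    and "Lim at_top (\<lambda>t. t / (l + t)) = 1"
  by (rule tendsto_Lim[OF trivial_limit_at_top_linorder]; real_asymp)+

locale network =
  fixes V :: "'v set" and E :: "'e set" and ep eq :: "'e \<Rightarrow> 'v" and L :: "'e \<Rightarrow> real"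
  assumes metrized_graph: "metrized_graph V E ep eq L"
begin

lemma finite_V: "finite V"
  and finite_E: "finite E"
  and ep_in_V: "i \<in> E \<Longrightarrow> ep i \<in> V"
  and eq_in_V: "i \<in> E \<Longrightarrow> eq i \<in> V"
  and length_pos: "i \<in> E \<Longrightarrow> L i > 0"
  using metrized_graph unfolding metrized_graph_def by auto

lemma lap_add: "lap E ep eq L (\<lambda>x. f x + g x) u = lap E ep eq L f u + lap E ep eq L g u"
proof -
  have "(f u + g u - (f x + g x)) / l = (f u - f x) / l + (g u - g x) / l" for x and l :: real
    by (simp only: add_diff_add add_divide_distrib)
  then show ?thesis
    by (simp add: lap_def sum.distrib)
qed

lemma lap_diff: "lap E ep eq L (\<lambda>x. f x - g x) u = lap E ep eq L f u - lap E ep eq L g u"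
proof -
  have "(f u - g u - (f x - g x)) / l = (f u - f x) / l - (g u - g x) / l" for x and l :: real
    by (simp add: diff_divide_distrib)
  then show ?thesis
    by (simp add: lap_def sum_subtractf)
qed

lemma lap_scale: "lap E ep eq L (\<lambda>x. c * f x) u = c * lap E ep eq L f u"
  by (simp add: lap_def sum_distrib_left algebra_simps)

lemma lap_const: "lap E ep eq L (\<lambda>x. c) u = 0"
  by (simp add: lap_def)

lemma lap_sum:
  assumes "finite S"
  shows "lap E ep eq L (\<lambda>x. \<Sum>w\<in>S. h w x) u = (\<Sum>w\<in>S. lap E ep eq L (h w) u)"
  using assms by (induction S rule: finite_induct) (simp_all add: lap_const lap_add)

lemma lap_remove_edge:
  assumes "i \<in> E"
  shows "lap E ep eq L f u = lap (E - {i}) ep eq L f u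
      + (if ep i = u then (f u - f (eq i)) / L i else 0)
      + (if eq i = u then (f u - f (ep i)) / L i else 0)"
proof -
  have split: "(\<Sum>j\<in>{j\<in>E. g j = u}. F j) = (\<Sum>j\<in>{j\<in>E - {i}. g j = u}. F j) + (if g i = u then F i else 0)"
    for g :: "'e \<Rightarrow> 'v" and F :: "'e \<Rightarrow> real"
  proof (cases "g i = u")
    case True
    then have "{j\<in>E. g j = u} = insert i {j\<in>E - {i}. g j = u}"
      using assms by auto
    then show ?thesis
      using True finite_E by simp
  next
    case False
    then have "{j\<in>E. g j = u} = {j\<in>E - {i}. g j = u}"
      by auto
    then show ?thesis
      using False by simp
  qed
  show ?thesis
    unfolding lap_def split by simp
qed

lemma sum_edges_at_vertices:
  assumes "\<And>i. i \<in> E \<Longrightarrow> f i \<in> V"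
  shows "(\<Sum>u\<in>V. \<Sum>i\<in>{i \<in> E. f i = u}. G u i) = (\<Sum>i\<in>E. G (f i) i)"
proof -
  have "(\<Sum>u\<in>V. \<Sum>i\<in>{i \<in> E. f i = u}. G u i) = (\<Sum>u\<in>V. \<Sum>i\<in>{i \<in> E. f i = u}. G (f i) i)"
    by (intro sum.cong refl) auto
  also have "\<dots> = (\<Sum>i\<in>E. G (f i) i)"
    using sum.group[of E V f "\<lambda>i. G (f i) i"] assms finite_V finite_E by auto
  finally show ?thesis .
qed

lemma sum_val_mult: "(\<Sum>q\<in>V. real (val E ep eq q) * d q) = (\<Sum>i\<in>E. d (ep i) + d (eq i))"
proof -
  have "(\<Sum>q\<in>V. real (val E ep eq q) * d q)
      = (\<Sum>q\<in>V. \<Sum>i\<in>{i\<in>E. ep i = q}. d q) + (\<Sum>q\<in>V. \<Sum>i\<in>{i\<in>E. eq i = q}. d q)"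
    by (simp add: val_def sum.distrib algebra_simps)
  also have "\<dots> = (\<Sum>i\<in>E. d (ep i) + d (eq i))"
    by (simp only: sum.distrib sum_edges_at_vertices[OF ep_in_V] sum_edges_at_vertices[OF eq_in_V])
  finally show ?thesis .
qed

lemma sum_lap_diag:
  "(\<Sum>u\<in>V. lap E ep eq L (H u) u)
     = (\<Sum>i\<in>E. (H (ep i) (ep i) - H (ep i) (eq i)) / L i + (H (eq i) (eq i) - H (eq i) (ep i)) / L i)"
  by (simp add: lap_def sum.distrib sum_edges_at_vertices ep_in_V eq_in_V)

lemma green_identity:
  "(\<Sum>u\<in>V. g u * lap E ep eq L f u) = (\<Sum>i\<in>E. (g (ep i) - g (eq i)) * (f (ep i) - f (eq i)) / L i)"
proof -
  have "(\<Sum>u\<in>V. g u * lap E ep eq L f u) = (\<Sum>u\<in>V. lap E ep eq L (\<lambda>x. g u * f x) u)"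
    by (simp add: lap_scale)
  also have "\<dots> = (\<Sum>i\<in>E. (g (ep i) - g (eq i)) * (f (ep i) - f (eq i)) / L i)"
    unfolding sum_lap_diag by (intro sum.cong refl) (simp add: add_divide_distrib[symmetric] algebra_simps)
  finally show ?thesis .
qed

lemma sum_lap_eq_0: "(\<Sum>u\<in>V. lap E ep eq L f u) = 0"
  using green_identity[of "\<lambda>_. 1" f] by simp

lemma lap_cong: "u \<in> V \<Longrightarrow> (\<And>x. x \<in> V \<Longrightarrow> f x = g x) \<Longrightarrow> lap E ep eq L f u = lap E ep eq L g u"
  unfolding lap_def by (intro arg_cong2[where f = "(+)"] sum.cong) (auto simp: ep_in_V eq_in_V)

lemma lap_eq_sum_lap_indicator:
  assumes "u \<in> V"
  shows "lap E ep eq L f u = (\<Sum>w\<in>V. lap E ep eq L (\<lambda>x. if x = w then 1 else 0) u * f w)"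
proof -
  have "lap E ep eq L f u = lap E ep eq L (\<lambda>x. \<Sum>w\<in>V. f w * (if x = w then 1 else 0)) u"
    using assms finite_V by (intro lap_cong) (simp_all add: if_distrib cong: if_cong)
  also have "\<dots> = (\<Sum>w\<in>V. lap E ep eq L (\<lambda>x. if x = w then 1 else 0) u * f w)"
    by (simp add: lap_sum[OF finite_V] lap_scale mult.commute)
  finally show ?thesis .
qed

lemma lap_eq_at_remaining_vertex:
  assumes "z \<in> V" "\<forall>u\<in>V - {z}. lap E ep eq L g u = s u" "(\<Sum>u\<in>V. s u) = 0"
  shows "\<forall>u\<in>V. lap E ep eq L g u = s u"
proof -
  have "lap E ep eq L g z + (\<Sum>u\<in>V - {z}. lap E ep eq L g u) = s z + (\<Sum>u\<in>V - {z}. s u)"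
    using sum_lap_eq_0[of g] assms finite_V by (simp add: sum.remove)
  then have "lap E ep eq L g z = s z"
    using assms(2) by simp
  then show ?thesis
    using assms(2) by blast
qed

end

locale connected_network = network +
  assumes connected: "connected_graph V E ep eq"
begin

abbreviation J where "J \<equiv> jvolt V E ep eq L"
abbreviation r where "r \<equiv> eff_res V E ep eq L"

lemma harmonic_imp_constant:
  assumes harmonic: "\<forall>u\<in>V. lap E ep eq L f u = 0" and "x \<in> V" "y \<in> V"
  shows "f x = f y"
proof -
  have "(\<Sum>i\<in>E. (f (ep i) - f (eq i)) * (f (ep i) - f (eq i)) / L i) = 0"
    using green_identity[of f f] harmonic by simp
  then have "\<forall>i\<in>E. (f (ep i) - f (eq i)) * (f (ep i) - f (eq i)) / L i = 0"
    using finite_E length_pos by (subst (asm) sum_nonneg_eq_0_iff) (auto intro: divide_nonneg_pos)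
  then have step: "f a = f b" if "(a, b) \<in> adj E ep eq" for a b
    using that length_pos unfolding adj_def by (auto simp: less_imp_neq[symmetric])
  have "(x, y) \<in> (adj E ep eq)\<^sup>*"
    using connected assms unfolding connected_graph_def by blast
  then show ?thesis
    by (induction rule: rtrancl_induct) (auto dest: step)
qed

text \<open>The equations at \<open>V - {z}\<close> form a nonsingular system by connectivity; the equation at \<open>z\<close>
  then holds because both sides sum to zero over \<open>V\<close>.\<close>
lemma exists_grounded_potential:
  assumes z: "z \<in> V" and s: "(\<Sum>u\<in>V. s u) = 0"
  shows "\<exists>g. g z = 0 \<and> (\<forall>u\<in>V. lap E ep eq L g u = s u) \<and> (\<forall>u. u \<notin> V \<longrightarrow> g u = 0)"
proof -
  define W where "W = V - {z}"
  define M where "M u w = lap E ep eq L (\<lambda>x. if x = w then 1 else 0) u" for u w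
  define extend where "extend f x = (if x \<in> W then f x else (0::real))" for f x
  have extend: "extend f z = 0" "\<forall>u. u \<notin> V \<longrightarrow> extend f u = 0" for f
    unfolding extend_def W_def by auto
  have lap_extend: "lap E ep eq L (extend f) u = (\<Sum>w\<in>W. M u w * f w)" if "u \<in> V" for f u
  proof -
    have "lap E ep eq L (extend f) u = (\<Sum>w\<in>V. M u w * extend f w)"
      unfolding M_def by (rule lap_eq_sum_lap_indicator[OF that])
    also have "\<dots> = (\<Sum>w\<in>W. M u w * f w)"
      using finite_V z unfolding W_def extend_def by (simp add: sum.remove cong: sum.cong_simp)
    finally show ?thesis .
  qed
  have "\<exists>f. \<forall>u\<in>W. (\<Sum>w\<in>W. M u w * f w) = s u"
  proof (rule linear_system_solvable_if_unique)
    show "finite W"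
      using finite_V unfolding W_def by simp
  next
    fix f assume "\<forall>u\<in>W. (\<Sum>w\<in>W. M u w * f w) = 0"
    then have "\<forall>u\<in>V. lap E ep eq L (extend f) u = 0"
      using lap_eq_at_remaining_vertex[OF z, of "extend f" "\<lambda>_. 0"] lap_extend unfolding W_def by simp
    then have "extend f w = extend f z" if "w \<in> V" for w
      using harmonic_imp_constant z that by blast
    then show "\<forall>w\<in>W. f w = 0"
      using extend(1) unfolding extend_def W_def by (metis DiffD1)
  qed
  then obtain f where "\<forall>u\<in>W. (\<Sum>w\<in>W. M u w * f w) = s u" ..
  then have "\<forall>u\<in>V. lap E ep eq L (extend f) u = s u"
    using lap_eq_at_remaining_vertex[OF z _ s] lap_extend unfolding W_def by simp
  then show ?thesis
    using extend by blast
qed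

lemma jvolt_solves:
  assumes y: "y \<in> V" and z: "z \<in> V"
  shows "J z z y = 0 \<and>
    (\<forall>u\<in>V. lap E ep eq L (\<lambda>x. J z x y) u = (if u = y then 1 else 0) - (if u = z then 1 else 0))"
proof -
  let ?P = "\<lambda>f. f z = 0 \<and>
    (\<forall>u\<in>V. lap E ep eq L f u = (if u = y then 1 else 0) - (if u = z then 1 else 0)) \<and>
    (\<forall>u. u \<notin> V \<longrightarrow> f u = 0)"
  have "(\<Sum>u\<in>V. (if u = y then 1 else 0) - (if u = z then 1 else 0) :: real) = 0"
    using finite_V y z by (simp add: sum_subtractf)
  then obtain g where g: "?P g"
    using exists_grounded_potential[OF z] by blast
  moreover have "f = g" if f: "?P f" for f
  proof
    fix x
    have "\<forall>u\<in>V. lap E ep eq L (\<lambda>x. f x - g x) u = 0"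
      using f g by (simp add: lap_diff)
    then have "f x - g x = f z - g z" if "x \<in> V"
      using harmonic_imp_constant z that by blast
    then show "f x = g x"
      using f g by (cases "x \<in> V") auto
  qed
  ultimately have "?P (THE f. ?P f)"
    by (rule theI)
  then show ?thesis
    unfolding jvolt_def by simp
qed

lemma jvolt_ground: "y \<in> V \<Longrightarrow> z \<in> V \<Longrightarrow> J z z y = 0"
  using jvolt_solves by blast

lemma lap_jvolt: "y \<in> V \<Longrightarrow> z \<in> V \<Longrightarrow> u \<in> V \<Longrightarrow>
    lap E ep eq L (\<lambda>x. J z x y) u = (if u = y then 1 else 0) - (if u = z then 1 else 0)"
  using jvolt_solves by blast

lemma jvolt_unique:
  assumes "y \<in> V" "z \<in> V" "x \<in> V"
    and "\<forall>u\<in>V. lap E ep eq L f u = c * ((if u = y then 1 else 0) - (if u = z then 1 else 0))"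
  shows "f x - f z = c * J z x y"
proof -
  have "\<forall>u\<in>V. lap E ep eq L (\<lambda>x. f x - c * J z x y) u = 0"
    using assms by (simp add: lap_diff lap_scale lap_jvolt)
  then have "f x - c * J z x y = f z - c * J z z y"
    using harmonic_imp_constant assms by blast
  then show ?thesis
    using jvolt_ground assms by simp
qed

lemma jvolt_source_eq_ground: "z \<in> V \<Longrightarrow> x \<in> V \<Longrightarrow> J z x z = 0"
  using jvolt_unique[of z z x "\<lambda>_. 0" 1] by (simp add: lap_const)

lemma jvolt_eq_energy_pairing:
  assumes "a \<in> V" "b \<in> V" "z \<in> V"
  shows "J z b a = (\<Sum>i\<in>E. (J z (ep i) a - J z (eq i) a) * (J z (ep i) b - J z (eq i) b) / L i)"
proof -
  have "(\<Sum>u\<in>V. J z u a * lap E ep eq L (\<lambda>x. J z x b) u)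
      = (\<Sum>u\<in>V. (if u = b then J z u a else 0) - (if u = z then J z u a else 0))"
    by (rule sum.cong) (auto simp: lap_jvolt assms)
  also have "\<dots> = J z b a"
    using finite_V assms jvolt_ground by (simp add: sum_subtractf)
  finally show ?thesis
    using green_identity by simp
qed

lemma jvolt_sym: "x \<in> V \<Longrightarrow> y \<in> V \<Longrightarrow> z \<in> V \<Longrightarrow> J z x y = J z y x"
  using jvolt_eq_energy_pairing by (simp add: mult.commute)

lemma eff_res_nonneg:
  assumes "x \<in> V" "y \<in> V"
  shows "0 \<le> r x y"
  unfolding eff_res_def jvolt_eq_energy_pairing[OF assms(1,1,2)]
  using length_pos by (intro sum_nonneg) (auto intro: divide_nonneg_pos)

lemma jvolt_change_ground:
  assumes "x \<in> V" "y \<in> V" "z \<in> V" "w \<in> V"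
  shows "J w x y = J z x y - J z x w - J z w y + J z w w"
  using jvolt_unique[OF assms(2,4,1), of "\<lambda>x. J z x y - J z x w" 1] assms
  by (simp add: lap_diff lap_jvolt)

lemma eff_res_sym: "x \<in> V \<Longrightarrow> y \<in> V \<Longrightarrow> r x y = r y x"
  unfolding eff_res_def
  using jvolt_change_ground[of x x x y] jvolt_ground[of _ x] jvolt_source_eq_ground[of x y] by simp

lemma jvolt_eq_eff_res:
  assumes "x \<in> V" "y \<in> V" "z \<in> V"
  shows "2 * J z x y = r x z + r y z - r x y"
  unfolding eff_res_def
  using jvolt_change_ground[of x x z y] jvolt_sym[of x y z] assms by simp

lemma eff_res_diff:
  assumes "a \<in> V" "b \<in> V" "p \<in> V"
  shows "r a p - r b p = 2 * J a p b - r a b"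
  using jvolt_eq_eff_res[of p b a] eff_res_sym assms by simp

lemma connected_network_remove_edge:
  assumes "\<not> is_bridge V E ep eq i"
  shows "connected_network V (E - {i}) ep eq L"
  using assms metrized_graph unfolding is_bridge_def
  by unfold_locales (auto simp: metrized_graph_def)

lemma bridge_ends_disconnected:
  assumes "i \<in> E" "is_bridge V E ep eq i"
  shows "(ep i, eq i) \<notin> (adj (E - {i}) ep eq)\<^sup>*"
proof
  let ?R = "adj (E - {i}) ep eq"
  assume ends: "(ep i, eq i) \<in> ?R\<^sup>*"
  have "sym (?R\<^sup>*)"
    by (rule sym_rtrancl) (auto simp: sym_def adj_def)
  with ends have "(eq i, ep i) \<in> ?R\<^sup>*"
    by (auto dest: symD)
  with ends have "adj E ep eq \<subseteq> ?R\<^sup>*"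
    unfolding adj_def by blast
  then have "(adj E ep eq)\<^sup>* \<subseteq> ?R\<^sup>*"
    by (metis rtrancl_subset_rtrancl)
  then have "connected_graph V (E - {i}) ep eq"
    using connected unfolding connected_graph_def by blast
  with assms(2) show False
    unfolding is_bridge_def by simp
qed

text \<open>In the full network the potential of the network without \<open>i\<close> also drives the current
  \<open>R / L i\<close> through the edge \<open>i\<close>, where \<open>R\<close> is the voltage it produces between the ends of \<open>i\<close>.\<close>
lemma jvolt_add_edge:
  assumes i: "i \<in> E" and G': "connected_network V (E - {i}) ep eq L"
    and ends: "(y = ep i \<and> z = eq i) \<or> (y = eq i \<and> z = ep i)" and x: "x \<in> V"
  shows "J z x y = jvolt V (E - {i}) ep eq L z x y * L i / (L i + jvolt V (E - {i}) ep eq L z y y)"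
proof -
  define h where "h x = jvolt V (E - {i}) ep eq L z x y" for x
  define R where "R = h y"
  define l where "l = L i"
  have yz: "y \<in> V" "z \<in> V"
    using ends i ep_in_V eq_in_V by auto
  have l: "l > 0"
    using length_pos[OF i] unfolding l_def .
  have R: "R \<ge> 0"
    using connected_network.eff_res_nonneg[OF G' yz] unfolding R_def h_def eff_res_def .
  have hz: "h z = 0"
    using connected_network.jvolt_ground[OF G' yz] unfolding h_def .
  have "\<forall>u\<in>V. lap E ep eq L h u = (l + R) / l * ((if u = y then 1 else 0) - (if u = z then 1 else 0))"
  proof
    fix u assume u: "u \<in> V"
    have "lap (E - {i}) ep eq L h u = (if u = y then 1 else 0) - (if u = z then 1 else 0)"
      using connected_network.lap_jvolt[OF G' yz u] unfolding h_def .
    then have "lap E ep eq L h u = (if u = y then 1 else 0) - (if u = z then 1 else 0)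
        + (if ep i = u then (h u - h (eq i)) / l else 0) + (if eq i = u then (h u - h (ep i)) / l else 0)"
      using lap_remove_edge[OF i, of h u] unfolding l_def by simp
    then show "lap E ep eq L h u = (l + R) / l * ((if u = y then 1 else 0) - (if u = z then 1 else 0))"
      using ends hz l unfolding R_def by (cases "y = z") (auto simp: field_simps)
  qed
  from jvolt_unique[OF yz x this] have "h x = (l + R) / l * J z x y"
    using hz by simp
  then show ?thesis
    using l R unfolding h_def R_def l_def by (simp add: field_simps)
qed

lemma eff_res_nonbridge_edge:
  assumes i: "i \<in> E" and nb: "\<not> is_bridge V E ep eq i" and p: "p \<in> V"
  shows "0 \<le> R_del V E ep eq L i"
    and "r (ep i) (eq i) = L i * R_del V E ep eq L i / (L i + R_del V E ep eq L i)"
    and "r (ep i) p - r (eq i) p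
      = L i * (R_a V E ep eq L i p - R_b V E ep eq L i p) / (L i + R_del V E ep eq L i)"
proof -
  define a b l where "a = ep i" and "b = eq i" and "l = L i"
  define R Ra Rb where "R = R_del V E ep eq L i" and "Ra = R_a V E ep eq L i p"
    and "Rb = R_b V E ep eq L i p"
  note G' = connected_network_remove_edge[OF nb]
  have ab: "a \<in> V" "b \<in> V"
    using i ep_in_V eq_in_V unfolding a_def b_def by auto
  have R_ab: "jvolt V (E - {i}) ep eq L b a a = R" "jvolt V (E - {i}) ep eq L a b b = R"
    using connected_network.eff_res_sym[OF G' ab]
    unfolding R_def R_del_def eff_res_def a_def b_def by simp_all
  show "0 \<le> R_del V E ep eq L i"
    using connected_network.eff_res_nonneg[OF G' ab] unfolding R_del_def a_def b_def .
  have r_ab: "r a b = l * R / (l + R)"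
    using jvolt_add_edge[OF i G', of a b a] ab R_ab unfolding eff_res_def a_def b_def l_def
    by (simp add: mult.commute)
  then show "r (ep i) (eq i) = L i * R_del V E ep eq L i / (L i + R_del V E ep eq L i)"
    unfolding a_def b_def l_def R_def .
  have R_sum: "R = Ra + Rb"
    using connected_network.jvolt_eq_eff_res[OF G' p ab(2) ab(1)]
      connected_network.jvolt_eq_eff_res[OF G' p ab(1) ab(2)]
      connected_network.eff_res_sym[OF G' ab] R_ab
    unfolding Ra_def Rb_def R_a_def R_b_def eff_res_def a_def b_def by simp
  have "J a p b = Ra * l / (l + R)"
    using jvolt_add_edge[OF i G', of b a p] p R_ab unfolding Ra_def R_a_def a_def b_def l_def by simp
  then have "r a p - r b p = 2 * (Ra * l / (l + R)) - l * R / (l + R)"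
    using eff_res_diff[OF ab p] r_ab by simp
  also have "\<dots> = l * (2 * Ra - R) / (l + R)"
    by (simp add: diff_divide_distrib right_diff_distrib mult_ac)
  also have "\<dots> = l * (Ra - Rb) / (l + R)"
    unfolding R_sum by simp
  finally have "r a p - r b p = l * (Ra - Rb) / (l + R)" .
  then show "r (ep i) p - r (eq i) p
      = L i * (R_a V E ep eq L i p - R_b V E ep eq L i p) / (L i + R_del V E ep eq L i)"
    unfolding a_def b_def l_def R_def Ra_def Rb_def .
qed

text \<open>The potential that is \<open>L i\<close> on the component of \<open>ep i\<close> in the network without \<open>i\<close> and \<open>0\<close>
  elsewhere carries the unit current from \<open>ep i\<close> to \<open>eq i\<close>.\<close>
lemma eff_res_bridge_edge:
  assumes i: "i \<in> E" and br: "is_bridge V E ep eq i" and p: "p \<in> V"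
  shows "r (ep i) (eq i) = L i"
    and "(r (ep i) p - r (eq i) p)\<^sup>2 = (L i)\<^sup>2"
proof -
  define a b l where "a = ep i" and "b = eq i" and "l = L i"
  define f where "f x = (if (a, x) \<in> (adj (E - {i}) ep eq)\<^sup>* then l else 0)" for x
  have ab: "a \<in> V" "b \<in> V"
    using i ep_in_V eq_in_V unfolding a_def b_def by auto
  have fa: "f a = l" and fb: "f b = 0"
    using bridge_ends_disconnected[OF i br] unfolding f_def a_def b_def by auto
  have "f (ep j) = f (eq j)" if "j \<in> E - {i}" for j
  proof -
    have "(ep j, eq j) \<in> adj (E - {i}) ep eq" "(eq j, ep j) \<in> adj (E - {i}) ep eq"
      using that unfolding adj_def by auto
    then show ?thesis
      unfolding f_def by (meson rtrancl.rtrancl_into_rtrancl)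
  qed
  then have "lap (E - {i}) ep eq L f u = 0" for u
    unfolding lap_def by (auto intro!: sum.neutral)
  then have lap_f: "\<forall>u\<in>V. lap E ep eq L f u = 1 * ((if u = a then 1 else 0) - (if u = b then 1 else 0))"
    using lap_remove_edge[OF i, of f] fa fb length_pos[OF i] unfolding a_def b_def l_def by auto
  have r_ab: "r a b = l"
    using jvolt_unique[OF ab(1,2) ab(1) lap_f] fa fb unfolding eff_res_def by simp
  then show "r (ep i) (eq i) = L i"
    unfolding a_def b_def l_def .
  have "\<forall>u\<in>V. lap E ep eq L (\<lambda>x. l - f x) u = 1 * ((if u = b then 1 else 0) - (if u = a then 1 else 0))"
    using lap_f by (simp add: lap_diff lap_const)
  from jvolt_unique[OF ab(2,1) p this] have "J a p b = l - f p"
    using fa by simp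
  then have "r a p - r b p = l - 2 * f p"
    using eff_res_diff[OF ab p] r_ab by simp
  moreover have "(l - 2 * f p)\<^sup>2 = l\<^sup>2"
    unfolding f_def by (simp add: power2_eq_square algebra_simps)
  ultimately show "(r (ep i) p - r (eq i) p)\<^sup>2 = (L i)\<^sup>2"
    unfolding a_def b_def l_def by simp
qed

lemma edge_expr_squared_diff:
  assumes i: "i \<in> E" and p: "p \<in> V"
  shows "edge_expr V E ep eq L i p (\<lambda>l R ra rb. l * (ra - rb)\<^sup>2 / (l + R)\<^sup>2)
    = (r (ep i) p - r (eq i) p)\<^sup>2 / L i"
proof (cases "is_bridge V E ep eq i")
  case True
  then show ?thesis
    using eff_res_bridge_edge[OF i True p] length_pos[OF i]
    unfolding edge_expr_def if_P[OF True] Lim_at_top_edge_fractions by (simp add: power2_eq_square)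
next
  case False
  then show ?thesis
    using eff_res_nonbridge_edge[OF i False p] length_pos[OF i]
    by (simp add: edge_expr_def power_divide power2_eq_square)
qed

lemma edge_expr_length_fraction:
  assumes i: "i \<in> E" and p: "p \<in> V"
  shows "edge_expr V E ep eq L i p (\<lambda>l R ra rb. l / (l + R)) = 1 - r (ep i) (eq i) / L i"
proof (cases "is_bridge V E ep eq i")
  case True
  then show ?thesis
    using eff_res_bridge_edge[OF i True p] length_pos[OF i] by (simp add: edge_expr_def Lim_at_top_edge_fractions)
next
  case False
  then have "L i + R_del V E ep eq L i > 0"
    using eff_res_nonbridge_edge(1)[OF i False p] length_pos[OF i] by linarith
  then show ?thesis
    using False eff_res_nonbridge_edge(2)[OF i False p] length_pos[OF i] by (simp add: edge_expr_def field_simps)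
qed

lemma edge_expr_resistance_fraction:
  assumes i: "i \<in> E" and p: "p \<in> V"
  shows "edge_expr V E ep eq L i p (\<lambda>l R ra rb. R / (l + R)) = r (ep i) (eq i) / L i"
proof (cases "is_bridge V E ep eq i")
  case True
  then show ?thesis
    using eff_res_bridge_edge[OF i True p] length_pos[OF i] by (simp add: edge_expr_def Lim_at_top_edge_fractions)
next
  case False
  then show ?thesis
    using eff_res_nonbridge_edge(2)[OF i False p] length_pos[OF i] by (simp add: edge_expr_def)
qed

lemma twice_sum_eff_res:
  assumes p: "p \<in> V"
  shows "2 * (\<Sum>q\<in>V. r q p)
    = (\<Sum>i\<in>E. ((r (ep i) p - r (eq i) p)\<^sup>2 + r (ep i) (eq i) * (r (ep i) p + r (eq i) p)) / L i)"
proof -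
  define d where "d u = r u p" for u
  have "(\<Sum>u\<in>V. d u) = (\<Sum>u\<in>V. lap E ep eq L (\<lambda>x. d u * J p x u) u)"
    using p jvolt_ground[OF p p] by (intro sum.cong) (auto simp: lap_scale lap_jvolt d_def eff_res_def)
  also have "\<dots> = (\<Sum>i\<in>E. (d (ep i) * d (ep i) - d (ep i) * J p (eq i) (ep i)) / L i
      + (d (eq i) * d (eq i) - d (eq i) * J p (ep i) (eq i)) / L i)"
    unfolding sum_lap_diag d_def eff_res_def ..
  finally have "2 * (\<Sum>u\<in>V. d u) = (\<Sum>i\<in>E. 2 * ((d (ep i) * d (ep i) - d (ep i) * J p (eq i) (ep i)) / L i
      + (d (eq i) * d (eq i) - d (eq i) * J p (ep i) (eq i)) / L i))"
    by (simp add: sum_distrib_left)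
  also have "\<dots> = (\<Sum>i\<in>E. ((d (ep i) - d (eq i))\<^sup>2 + r (ep i) (eq i) * (d (ep i) + d (eq i))) / L i)"
  proof (rule sum.cong[OF refl])
    fix i assume i: "i \<in> E"
    have J_ends: "J p (ep i) (eq i) = (d (ep i) + d (eq i) - r (ep i) (eq i)) / 2"
      "J p (eq i) (ep i) = (d (ep i) + d (eq i) - r (ep i) (eq i)) / 2"
      using jvolt_eq_eff_res eff_res_sym ep_in_V[OF i] eq_in_V[OF i] p unfolding d_def
      by (simp_all add: eq_divide_eq mult.commute)
    show "2 * ((d (ep i) * d (ep i) - d (ep i) * J p (eq i) (ep i)) / L i
        + (d (eq i) * d (eq i) - d (eq i) * J p (ep i) (eq i)) / L i)
      = ((d (ep i) - d (eq i))\<^sup>2 + r (ep i) (eq i) * (d (ep i) + d (eq i))) / L i"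
      unfolding J_ends using length_pos[OF i] by (simp add: field_simps power2_eq_square)
  qed
  finally show ?thesis
    unfolding d_def .
qed

end

theorem lemma3p3:
  fixes V :: "'v set" and E :: "'e set" and ep eq :: "'e \<Rightarrow> 'v" and L :: "'e \<Rightarrow> real"
    and p :: 'v
  assumes "metrized_graph V E ep eq L"
    and "connected_graph V E ep eq"
    and "p \<in> V"
  shows "(\<Sum>i\<in>E. edge_expr V E ep eq L i p (\<lambda>l R ra rb. l * (ra - rb)\<^sup>2 / (l + R)\<^sup>2))
           = (\<Sum>i\<in>E. edge_expr V E ep eq L i p (\<lambda>l R ra rb. l / (l + R))
                  * (eff_res V E ep eq L (ep i) p + eff_res V E ep eq L (eq i) p))
             - (\<Sum>q\<in>V. (real (val E ep eq q) - 2) * eff_res V E ep eq L p q)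
       \<and> (\<Sum>i\<in>E. edge_expr V E ep eq L i p (\<lambda>l R ra rb. l / (l + R))
                  * (eff_res V E ep eq L (ep i) p + eff_res V E ep eq L (eq i) p))
             - (\<Sum>q\<in>V. (real (val E ep eq q) - 2) * eff_res V E ep eq L p q)
         = 2 * (\<Sum>q\<in>V. eff_res V E ep eq L p q)
           - (\<Sum>i\<in>E. edge_expr V E ep eq L i p (\<lambda>l R ra rb. R / (l + R))
                  * (eff_res V E ep eq L (ep i) p + eff_res V E ep eq L (eq i) p))"
proof -
  interpret connected_network V E ep eq L
    using assms(1,2) by unfold_locales
  have r_p: "(\<Sum>q\<in>V. f q * r p q) = (\<Sum>q\<in>V. f q * r q p)" for f
    using eff_res_sym assms(3) by (intro sum.cong) auto
  have valence: "(\<Sum>q\<in>V. (real (val E ep eq q) - 2) * r q p)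
      = (\<Sum>i\<in>E. r (ep i) p + r (eq i) p) - 2 * (\<Sum>q\<in>V. r q p)"
    by (simp add: left_diff_distrib sum_subtractf sum_distrib_left sum_val_mult)
  have "(\<Sum>i\<in>E. edge_expr V E ep eq L i p (\<lambda>l R ra rb. l / (l + R)) * (r (ep i) p + r (eq i) p))
      = (\<Sum>i\<in>E. r (ep i) p + r (eq i) p)
        - (\<Sum>i\<in>E. edge_expr V E ep eq L i p (\<lambda>l R ra rb. R / (l + R)) * (r (ep i) p + r (eq i) p))"
    using assms(3) by (simp add: edge_expr_length_fraction edge_expr_resistance_fraction
        left_diff_distrib sum_subtractf)
  moreover have "(\<Sum>i\<in>E. edge_expr V E ep eq L i p (\<lambda>l R ra rb. l * (ra - rb)\<^sup>2 / (l + R)\<^sup>2))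
      = 2 * (\<Sum>q\<in>V. r q p)
        - (\<Sum>i\<in>E. edge_expr V E ep eq L i p (\<lambda>l R ra rb. R / (l + R)) * (r (ep i) p + r (eq i) p))"
    using assms(3) by (simp add: twice_sum_eff_res edge_expr_squared_diff edge_expr_resistance_fraction
        add_divide_distrib sum.distrib)
  ultimately show ?thesis
    using r_p[of "\<lambda>_. 1"] r_p[of "\<lambda>q. real (val E ep eq q) - 2"] valence by simp
qed

end
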